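(* Let $\pi\in\mathfrak{B}_n$ and regard $\Omega'_B(\pi;x)$ as a polynomial in $x$. If $\pi(1)>0$ then $\Omega'_B(\pi;-x-1/2)=(-1)^n\,\Omega'_B(\pi;x-1/2)$. If $\pi(1)<0$ then $\Omega'_B(\pi;-x)=(-1)^n\,\Omega'_B(\pi;x)$.
   Context: $\mathfrak{B}_n$ is the group of signed permutations (bijections $\pi$ of $\{-n,\dots,n\}$ with $\pi(-i)=-\pi(i)$), written as words $(\pi(1),\dots,\pi(n))$, with $\pi(0)=0$. For an integer $k\ge0$ let $Z_k$ be the totally ordered set $0<\bar1<1<\bar2<2<\dots<\bar k<k$, with $0$ and unbarred $j$ "plus-type" and barred $\bar j$ "minus-type". $\Omega'_B(\pi;k)$ is the number of sequences $(a_1,\dots,a_n)\in Z_k^n$ such that, with $a_0=0$, $a_0\le a_1\le\dots\le a_n$ and for every $s\in\{0,\dots,n-1\}$: if $\pi(s)<\pi(s+1)$ then $a_s<a_{s+1}$ or ($a_s=a_{s+1}$ is plus-type); if $\pi(s)>\pi(s+1)$ then $a_s<a_{s+1}$ or ($a_s=a_{s+1}$ is minus-type). As a function of $k\ge0$ this agrees with a unique polynomial in $k$ with rational coefficients, denoted $\Omega'_B(\pi;x)$. *)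

theory Defs
  imports "HOL-Computational_Algebra.Polynomial"
begin

definition signed_perm :: "nat \<Rightarrow> (int \<Rightarrow> int) \<Rightarrow> bool" where
  "signed_perm n w \<longleftrightarrow>
     bij_betw w {-int n..int n} {-int n..int n} \<and>
     (\<forall>i\<in>{-int n..int n}. w (-i) = - w i)"

text \<open>Encoding of the totally ordered set Z_k = 0 < bar1 < 1 < bar2 < 2 < ... < bark < k
  as the natural numbers {0..2k}, order preserved: 0 is 0, bar j is 2j-1, j is 2j.
  Plus-type elements (0 and unbarred j) are exactly the even codes,
  minus-type elements (bar j) exactly the odd codes.\<close>
definition Zk :: "nat \<Rightarrow> nat set" where
  "Zk k = {0..2*k}"

definition plus_type :: "nat \<Rightarrow> bool" where
  "plus_type z \<longleftrightarrow> even z"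

definition minus_type :: "nat \<Rightarrow> bool" where
  "minus_type z \<longleftrightarrow> odd z"

text \<open>Admissible sequences (a_1,...,a_n) in Z_k^n, represented as functions with a 0 = 0
  and a i = 0 for i > n (so that they are uniquely determined by (a_1..a_n)).\<close>
definition OmegaB_seqs :: "nat \<Rightarrow> (int \<Rightarrow> int) \<Rightarrow> nat \<Rightarrow> (nat \<Rightarrow> nat) set" where
  "OmegaB_seqs n w k = {a. a 0 = 0 \<and> (\<forall>i>n. a i = 0) \<and>
      (\<forall>i\<in>{1..n}. a i \<in> Zk k) \<and>
      (\<forall>s<n. a s \<le> a (Suc s) \<and>
         (w (int s) < w (int (Suc s)) \<longrightarrow>
            a s < a (Suc s) \<or> (a s = a (Suc s) \<and> plus_type (a s))) \<and>
         (w (int s) > w (int (Suc s)) \<longrightarrow>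
            a s < a (Suc s) \<or> (a s = a (Suc s) \<and> minus_type (a s))))}"

definition OmegaB :: "nat \<Rightarrow> (int \<Rightarrow> int) \<Rightarrow> nat \<Rightarrow> nat" where
  "OmegaB n w k = card (OmegaB_seqs n w k)"

definition OmegaB_poly :: "nat \<Rightarrow> (int \<Rightarrow> int) \<Rightarrow> rat poly" where
  "OmegaB_poly n w = (THE p. \<forall>k::nat. poly p (of_nat k) = of_nat (OmegaB n w k))"

end

(*
  Fix the pattern of ascents and descents of pi and let N_s(m) be the number of admissible
  chains 0 = a_0 <= a_1 <= ... <= a_s whose last entry has code at most m (codes as in Zk).
  Appending a step gives N_{s+1}(m + 1) - N_{s+1}(m) = N_s(m'), where m' is m or m + 1
  according to parity, and this recurrence continues N_s to all integers.  If N_s is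
  symmetric about an integer c, the differences of N_{s+1} are symmetric about c - 1/2; as
  N_{s+1} vanishes at c, it is symmetric about c with the opposite sign.  Hence
  N_s(-2 - m) = (-1)^s N_s(m) if pi(1) > 0 and N_s(-m) = (-1)^s N_s(m) if pi(1) < 0.
  Finally N_n(2j) is a polynomial in j, since antidifferences of polynomials are
  polynomials, and it agrees with Omega'_B(pi; j).
*)
theory Submission
  imports Defs
begin

lemma poly_eq_if_agree_on_nats:
  fixes p q :: "'a::{idom,ring_char_0} poly"
  assumes "\<And>k::nat. poly p (of_nat k) = poly q (of_nat k)"
  shows "p = q"
proof (rule ccontr)
  assume "p \<noteq> q"
  then have "finite {x. poly (p - q) x = 0}"
    by (intro poly_roots_finite) simp
  moreover have "\<nat> \<subseteq> {x. poly (p - q) x = 0}"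
    using assms by (auto elim!: Nats_cases)
  ultimately show False
    using Nats_infinite finite_subset by blast
qed

lemma poly_antidifference_exists:
  fixes p :: "'a::field_char_0 poly"
  shows "\<exists>q. \<forall>x. poly q (x + 1) - poly q x = poly p x"
proof (induction "degree p" arbitrary: p rule: less_induct)
  case less
  show ?case
  proof (cases "degree p = 0")
    case True
    then obtain c where "p = [:c:]"
      by (metis degree_eq_zeroE)
    then show ?thesis
      by (intro exI[of _ "[:0, c:]"]) (simp add: algebra_simps)
  next
    case False
    define d where "d = degree p"
    define c where "c = lead_coeff p / of_nat (Suc d)"
    define D where "D = smult c ([:1, 1:] ^ Suc d - monom 1 (Suc d))"
    have poly_D: "poly D x = poly (monom c (Suc d)) (x + 1) - poly (monom c (Suc d)) x" for x
      by (simp add: D_def poly_monom algebra_simps)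
    have "degree (p - D) < d"
    proof -
      have "coeff (p - D) i = 0" if "i \<ge> d" for i
      proof (cases "i = d")
        case True
        have "coeff ([:1, 1:] ^ Suc d) d = (of_nat (Suc d) :: 'a)"
          using coeff_linear_poly_power[of d "Suc d" "1::'a" 1] by simp
        moreover have "(of_nat (Suc d) :: 'a) \<noteq> 0"
          by (rule of_nat_neq_0)
        ultimately show ?thesis
          using True by (simp add: D_def c_def d_def coeff_monom del: power_Suc)
      next
        case False
        have "degree ([:1, 1:] ^ Suc d :: 'a poly) \<le> Suc d"
          using degree_power_le[of "[:1, 1::'a:]" "Suc d"] by simp
        with False that have "coeff ([:1, 1:] ^ Suc d) i = coeff (monom (1::'a) (Suc d)) i"
          by (cases "i = Suc d")
            (simp_all add: coeff_linear_poly_power coeff_monom coeff_eq_0 del: power_Suc)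
        moreover have "coeff p i = 0"
          using False that by (intro coeff_eq_0) (simp add: d_def)
        ultimately show ?thesis
          by (simp add: D_def)
      qed
      then show ?thesis
        using False d_def by (intro degree_lessI) auto
    qed
    then obtain q where "\<forall>x. poly q (x + 1) - poly q x = poly (p - D) x"
      using less d_def by blast
    then show ?thesis
      by (intro exI[of _ "q + monom c (Suc d)"]) (simp add: poly_D algebra_simps)
  qed
qed

lemma poly_reflection_from_Ints:
  fixes p :: "'a::{idom,ring_char_0} poly"
  assumes "\<And>j::int. poly p (of_int (a - j)) = e * poly p (of_int j)"
  shows "poly p (of_int a - x) = e * poly p x"
proof -
  have "pcompose p [:of_int a, -1:] = smult e p"
  proof (rule poly_eq_if_agree_on_nats)
    fix k :: nat
    show "poly (pcompose p [:of_int a, -1:]) (of_nat k) = poly (smult e p) (of_nat k)"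
      using assms[of "int k"] by (simp add: poly_pcompose)
  qed
  then have "poly (pcompose p [:of_int a, -1:]) x = poly (smult e p) x"
    by simp
  then show ?thesis
    by (simp add: poly_pcompose)
qed

lemma int_fun_eq_by_differences:
  fixes f g :: "int \<Rightarrow> 'a::ab_group_add"
  assumes diff: "\<And>m. f (m + 1) - f m = g (m + 1) - g m" and "f c = g c"
  shows "f m = g m"
proof (induction m rule: int_induct[of _ c])
  case base
  show ?case by (fact \<open>f c = g c\<close>)
next
  case (step1 i)
  then show ?case
    using diff[of i] by (simp add: diff_eq_eq)
next
  case (step2 i)
  then show ?case
    using diff[of "i - 1"] by (simp add: eq_diff_eq)
qed

lemma poly_interpolation_of_antidifference:
  fixes f :: "int \<Rightarrow> 'a::field_char_0"
  assumes "\<And>j. f (j + 1) - f j = poly p (of_int j)"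
  shows "\<exists>q. \<forall>j. poly q (of_int j) = f j"
proof -
  obtain q where q: "\<And>x. poly q (x + 1) - poly q x = poly p x"
    using poly_antidifference_exists by blast
  have "poly (q + [:f 0 - poly q 0:]) (of_int j) = f j" for j
    by (rule int_fun_eq_by_differences[where c = 0])
      (simp_all add: assms q[of "of_int _", symmetric])
  then show ?thesis by blast
qed

lemma reflection_of_differences:
  fixes F D :: "int \<Rightarrow> 'a::comm_ring_1"
  assumes "\<And>m. F (m + 1) - F m = D m"
    and "\<And>m. D (2 * c - 1 - m) = e * D m"
    and "F c = 0"
  shows "F (2 * c - m) = - e * F m"
proof (rule int_fun_eq_by_differences[where c = c])
  fix m
  have "F (2 * c - m) - F (2 * c - (m + 1)) = D (2 * c - 1 - m)"
    using assms(1)[of "2 * c - 1 - m"] by (simp add: algebra_simps)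
  then show "F (2 * c - (m + 1)) - F (2 * c - m) = - e * F (m + 1) - - e * F m"
    using assms(1)[of m] assms(2)[of m] by (simp add: algebra_simps)
qed (use assms(3) in simp)

definition indef_sum :: "(int \<Rightarrow> 'a::ab_group_add) \<Rightarrow> int \<Rightarrow> 'a" where
  "indef_sum f m = (\<Sum>i\<in>{0..<m}. f i) - (\<Sum>i\<in>{m..<0}. f i)"

lemma indef_sum_0 [simp]: "indef_sum f 0 = 0"
  by (simp add: indef_sum_def)

lemma indef_sum_diff: "indef_sum f (m + 1) - indef_sum f m = f m"
proof (cases "m \<ge> 0")
  case True
  then have "{0..<m + 1} = insert m {0..<m}" "{m + 1..<0} = {}" "{m..<0} = {}"
    by auto
  then show ?thesis by (simp add: indef_sum_def)
next
  case False
  then have "{m..<0} = insert m {m + 1..<0}" "{0..<m + 1} = {}" "{0..<m} = {}"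
    by auto
  then show ?thesis by (simp add: indef_sum_def)
qed

definition admissible_chains :: "(nat \<Rightarrow> bool) \<Rightarrow> nat \<Rightarrow> (nat \<Rightarrow> nat) set" where
  "admissible_chains t s = {a. a 0 = 0 \<and> (\<forall>i>s. a i = 0) \<and>
     (\<forall>r<s. a r < a (Suc r) \<or> (a r = a (Suc r) \<and> even (a r) = t r))}"

lemma admissible_chains_0: "admissible_chains t 0 = {\<lambda>_. 0}"
proof -
  have "a 0 = 0 \<and> (\<forall>i>0. a i = 0) \<longleftrightarrow> a = (\<lambda>_. 0)" for a :: "nat \<Rightarrow> nat"
    by (auto simp: fun_eq_iff) (metis neq0_conv)
  then show ?thesis
    by (auto simp: admissible_chains_def)
qed

lemma admissible_chains_mono:
  assumes "a \<in> admissible_chains t s" "i \<le> j" "j \<le> s"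
  shows "a i \<le> a j"
proof (rule lift_Suc_mono_le_ivl[of "{..<s}" a])
  show "a r \<le> a (Suc r)" if "r \<in> {..<s}" for r
    using assms(1) that by (auto simp: admissible_chains_def less_imp_le)
qed (use assms(2,3) in auto)

lemma finite_admissible_chains_le: "finite {a \<in> admissible_chains t s. a s \<le> m}"
proof (rule finite_subset)
  show "{a \<in> admissible_chains t s. a s \<le> m}
      \<subseteq> {a. \<forall>i. (i \<in> {..s} \<longrightarrow> a i \<in> {..m}) \<and> (i \<notin> {..s} \<longrightarrow> a i = 0)}"
  proof (intro subsetI CollectI allI conjI impI)
    fix a i
    assume a: "a \<in> {a \<in> admissible_chains t s. a s \<le> m}"
    show "a i \<in> {..m}" if "i \<in> {..s}"
      using admissible_chains_mono[of a t s i s] a that by auto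
    show "a i = 0" if "i \<notin> {..s}"
      using a that by (auto simp: admissible_chains_def)
  qed
qed (rule finite_set_of_finite_funs; simp)

lemma card_admissible_chains_Suc_last:
  "card {b \<in> admissible_chains t (Suc s). b (Suc s) = c}
     = card {a \<in> admissible_chains t s. a s < c \<or> (a s = c \<and> even c = t s)}"
  (is "card ?B = card ?A")
proof -
  have "bij_betw (\<lambda>a. a(Suc s := c)) ?A ?B"
  proof (rule bij_betw_byWitness[where f' = "\<lambda>b. b(Suc s := 0)"])
    show "\<forall>a\<in>?A. (a(Suc s := c))(Suc s := 0) = a"
      by (auto simp: admissible_chains_def fun_eq_iff)
    show "\<forall>b\<in>?B. (b(Suc s := 0))(Suc s := c) = b"
      by (auto simp: fun_eq_iff)
    show "(\<lambda>a. a(Suc s := c)) ` ?A \<subseteq> ?B"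
    proof (rule image_subsetI)
      fix a assume "a \<in> ?A"
      then have a: "a \<in> admissible_chains t s" "a s < c \<or> (a s = c \<and> even c = t s)"
        by auto
      have "(a(Suc s := c)) r < (a(Suc s := c)) (Suc r) \<or>
          ((a(Suc s := c)) r = (a(Suc s := c)) (Suc r) \<and> even ((a(Suc s := c)) r) = t r)"
        if "r < Suc s" for r
        using a that by (cases "r = s") (auto simp: admissible_chains_def)
      then show "a(Suc s := c) \<in> ?B"
        using a(1) by (auto simp: admissible_chains_def)
    qed
    show "(\<lambda>b. b(Suc s := 0)) ` ?B \<subseteq> ?A"
      by (auto simp: admissible_chains_def) (meson less_SucI)+
  qed
  then show ?thesis
    by (simp add: bij_betw_same_card)
qed

(* After a step of type t (True for an ascent, where ties are allowed exactly on even codes)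
   the code m + 1 may follow exactly the codes up to prev_bound t m. *)
definition prev_bound :: "bool \<Rightarrow> int \<Rightarrow> int" where
  "prev_bound t m = (if even m = t then m else m + 1)"

(* For m >= 0 this is the number of admissible chains of length s with last code at most m;
   for negative m it merely continues the recurrence. *)
fun chain_count :: "(nat \<Rightarrow> bool) \<Rightarrow> nat \<Rightarrow> int \<Rightarrow> int" where
  "chain_count t 0 m = 1"
| "chain_count t (Suc s) m =
     (if t s then chain_count t s 0 else 0) + indef_sum (\<lambda>i. chain_count t s (prev_bound (t s) i)) m"

lemma chain_count_Suc_0: "chain_count t (Suc s) 0 = (if t s then chain_count t s 0 else 0)"
  by simp

lemma chain_count_Suc_diff:
  "chain_count t (Suc s) (m + 1) - chain_count t (Suc s) m = chain_count t s (prev_bound (t s) m)"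
  using indef_sum_diff[of "\<lambda>i. chain_count t s (prev_bound (t s) i)" m] by simp

declare chain_count.simps(2) [simp del]

lemma card_admissible_chains_le:
  assumes "0 \<le> m"
  shows "int (card {a \<in> admissible_chains t s. int (a s) \<le> m}) = chain_count t s m"
  using assms
proof (induction s arbitrary: m)
  case 0
  then have "{a \<in> admissible_chains t 0. int (a 0) \<le> m} = {\<lambda>_. 0}"
    by (auto simp: admissible_chains_0)
  then show ?case by simp
next
  case (Suc s)
  show ?case
    using \<open>0 \<le> m\<close>
  proof (induction m rule: int_ge_induct)
    case base
    have "{b \<in> admissible_chains t (Suc s). int (b (Suc s)) \<le> 0}
        = {b \<in> admissible_chains t (Suc s). b (Suc s) = 0}"
      by auto
    moreover have "{a \<in> admissible_chains t s. a s < 0 \<or> (a s = 0 \<and> even 0 = t s)}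
        = (if t s then {a \<in> admissible_chains t s. int (a s) \<le> 0} else {})"
      by auto
    ultimately show ?case
      using Suc.IH[of 0] by (simp add: card_admissible_chains_Suc_last chain_count_Suc_0)
  next
    case (step m)
    let ?B = "\<lambda>m. {b \<in> admissible_chains t (Suc s). int (b (Suc s)) \<le> m}"
    let ?C = "{b \<in> admissible_chains t (Suc s). b (Suc s) = nat (m + 1)}"
    have top: "{a \<in> admissible_chains t s.
          a s < nat (m + 1) \<or> (a s = nat (m + 1) \<and> even (nat (m + 1)) = t s)}
        = {a \<in> admissible_chains t s. int (a s) \<le> prev_bound (t s) m}"
      using step.hyps by (auto simp: prev_bound_def even_nat_iff)
    have "prev_bound (t s) m \<ge> 0"
      using step.hyps by (simp add: prev_bound_def)
    then have card_C: "int (card ?C) = chain_count t s (prev_bound (t s) m)"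
      using Suc.IH by (simp add: card_admissible_chains_Suc_last top)
    have "?B m = {b \<in> admissible_chains t (Suc s). b (Suc s) \<le> nat m}"
      using step.hyps by auto
    then have "finite (?B m)"
      by (simp add: finite_admissible_chains_le)
    moreover have "finite ?C"
      using finite_admissible_chains_le[of t "Suc s" "nat (m + 1)"] by (rule finite_subset[rotated]) auto
    moreover have "?B (m + 1) = ?B m \<union> ?C" "?B m \<inter> ?C = {}"
      using step.hyps by (auto split: if_splits)
    ultimately have "card (?B (m + 1)) = card (?B m) + card ?C"
      by (simp add: card_Un_disjoint)
    then show ?case
      using step.IH card_C chain_count_Suc_diff[of t s m] by simp
  qed
qed

lemma prev_bound_reflect: "prev_bound t (2 * c - 1 - m) = 2 * c - prev_bound t m"
  by (simp add: prev_bound_def even_diff)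

lemma prev_bound_shift: "prev_bound t (2 * j + r) = 2 * j + prev_bound t r"
  by (simp add: prev_bound_def)

lemma chain_count_Suc_at_minus_one:
  assumes "t 0"
  shows "chain_count t (Suc s) (-1) = 0"
proof (induction s)
  case 0
  show ?case
    using assms chain_count_Suc_diff[of t 0 "-1"] by (simp add: chain_count_Suc_0 prev_bound_def)
next
  case (Suc s)
  then show ?case
    using chain_count_Suc_diff[of t "Suc s" "-1"]
    by (cases "t (Suc s)") (simp_all add: chain_count_Suc_0 prev_bound_def)
qed

lemma chain_count_Suc_at_zero:
  assumes "\<not> t 0"
  shows "chain_count t (Suc s) 0 = 0"
  using assms by (induction s) (simp_all add: chain_count_Suc_0)

lemma chain_count_reflect:
  fixes t :: "nat \<Rightarrow> bool"
  defines "c \<equiv> if t 0 then -1 else 0"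
  shows "chain_count t s (2 * c - m) = (-1) ^ s * chain_count t s m"
proof (induction s arbitrary: m)
  case 0
  show ?case by simp
next
  case (Suc s)
  have "chain_count t (Suc s) c = 0"
    using chain_count_Suc_at_minus_one chain_count_Suc_at_zero by (simp add: c_def)
  then show ?case
    using reflection_of_differences[where F = "chain_count t (Suc s)"
        and D = "\<lambda>m. chain_count t s (prev_bound (t s) m)", OF chain_count_Suc_diff]
    by (simp add: prev_bound_reflect Suc)
qed

lemma chain_count_quasi_polynomial:
  "\<exists>p :: rat poly. \<forall>j. poly p (of_int j) = of_int (chain_count t s (2 * j + r))"
proof (induction s arbitrary: r)
  case 0
  show ?case
    by (intro exI[of _ 1]) simp
next
  case (Suc s)
  obtain p0 p1 :: "rat poly" where
    p0: "\<And>j. poly p0 (of_int j) = of_int (chain_count t s (2 * j + prev_bound (t s) r))" and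
    p1: "\<And>j. poly p1 (of_int j) = of_int (chain_count t s (2 * j + prev_bound (t s) (r + 1)))"
    using Suc by metis
  have "chain_count t (Suc s) (2 * (j + 1) + r) - chain_count t (Suc s) (2 * j + r)
      = chain_count t s (2 * j + prev_bound (t s) r)
        + chain_count t s (2 * j + prev_bound (t s) (r + 1))"
    for j
    using chain_count_Suc_diff[of t s "2 * j + r"] chain_count_Suc_diff[of t s "2 * j + (r + 1)"]
      prev_bound_shift[of "t s" j r] prev_bound_shift[of "t s" j "r + 1"]
    by (simp add: algebra_simps)
  then show ?case
    by (intro poly_interpolation_of_antidifference[where p = "p0 + p1"])
      (simp add: p0 p1 algebra_simps)
qed

definition ascent :: "(int \<Rightarrow> int) \<Rightarrow> nat \<Rightarrow> bool" where
  "ascent w r \<longleftrightarrow> w (int r) < w (int (Suc r))"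

lemma OmegaB_seqs_eq_admissible_chains:
  assumes "\<forall>r<n. w (int r) \<noteq> w (int (Suc r))"
  shows "OmegaB_seqs n w k = {a \<in> admissible_chains (ascent w) n. a n \<le> 2 * k}"
proof (intro set_eqI iffI)
  fix a
  assume a: "a \<in> OmegaB_seqs n w k"
  have "a r < a (Suc r) \<or> (a r = a (Suc r) \<and> even (a r) = ascent w r)" if "r < n" for r
    using a that assms unfolding OmegaB_seqs_def plus_type_def minus_type_def ascent_def
    by (cases "w (int r) < w (int (Suc r))") auto
  moreover have "a n \<le> 2 * k"
    using a by (cases "n = 0") (auto simp: OmegaB_seqs_def Zk_def)
  ultimately show "a \<in> {a \<in> admissible_chains (ascent w) n. a n \<le> 2 * k}"
    using a by (simp add: OmegaB_seqs_def admissible_chains_def)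
next
  fix a
  assume a: "a \<in> {a \<in> admissible_chains (ascent w) n. a n \<le> 2 * k}"
  then have "a i \<in> Zk k" if "i \<le> n" for i
    using admissible_chains_mono[of a "ascent w" n i n] that by (auto simp: Zk_def)
  with a show "a \<in> OmegaB_seqs n w k"
    by (auto simp: OmegaB_seqs_def admissible_chains_def plus_type_def minus_type_def ascent_def
        less_imp_le)
qed

lemma OmegaB_eq_chain_count:
  assumes "\<forall>r<n. w (int r) \<noteq> w (int (Suc r))"
  shows "int (OmegaB n w k) = chain_count (ascent w) n (2 * int k)"
proof -
  have "{a \<in> admissible_chains (ascent w) n. a n \<le> 2 * k}
      = {a \<in> admissible_chains (ascent w) n. int (a n) \<le> 2 * int k}"
    by auto
  then show ?thesis
    using card_admissible_chains_le[of "2 * int k"]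
    by (simp add: OmegaB_def OmegaB_seqs_eq_admissible_chains[OF assms])
qed

lemma signed_perm_0:
  assumes "signed_perm n w"
  shows "w 0 = 0"
proof -
  have "\<forall>i\<in>{-int n..int n}. w (- i) = - w i"
    using assms by (simp add: signed_perm_def)
  then have "w (- 0) = - w 0"
    by (rule bspec) simp
  then show ?thesis by simp
qed

lemma signed_perm_adjacent_neq:
  assumes "signed_perm n w" "r < n"
  shows "w (int r) \<noteq> w (int (Suc r))"
proof -
  have "inj_on w {-int n..int n}"
    using assms(1) by (auto simp: signed_perm_def bij_betw_def)
  then show ?thesis
    using assms(2) by (auto dest: inj_onD)
qed

lemma OmegaB_poly_of_int:
  assumes "signed_perm n w"
  shows "poly (OmegaB_poly n w) (of_int j) = of_int (chain_count (ascent w) n (2 * j))"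
proof -
  obtain E :: "rat poly"
    where E: "\<And>j. poly E (of_int j) = of_int (chain_count (ascent w) n (2 * j))"
    using chain_count_quasi_polynomial[of "ascent w" n 0] by auto
  have E_nat: "\<forall>k. poly E (of_nat k) = of_nat (OmegaB n w k)"
    using E OmegaB_eq_chain_count signed_perm_adjacent_neq[OF assms] by (metis of_int_of_nat_eq)
  have "OmegaB_poly n w = E"
    unfolding OmegaB_poly_def
  proof (rule the_equality)
    show "p = E" if "\<forall>k. poly p (of_nat k) = of_nat (OmegaB n w k)" for p
      using that E_nat by (intro poly_eq_if_agree_on_nats) simp
  qed (fact E_nat)
  then show ?thesis
    by (simp add: E)
qed

lemma OmegaB_poly_reflect:
  fixes w :: "int \<Rightarrow> int"
  assumes "signed_perm n w"
  defines "c \<equiv> if ascent w 0 then -1 else 0 :: int"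
  shows "poly (OmegaB_poly n w) (of_int c - x) = (-1) ^ n * poly (OmegaB_poly n w) x"
proof (rule poly_reflection_from_Ints)
  fix j
  let ?P = "OmegaB_poly n w"
  have "poly ?P (of_int (c - j)) = of_int (chain_count (ascent w) n (2 * c - 2 * j))"
    using OmegaB_poly_of_int[OF assms(1), of "c - j"] by (simp only: right_diff_distrib)
  also have "\<dots> = (-1) ^ n * of_int (chain_count (ascent w) n (2 * j))"
    using chain_count_reflect[of "ascent w" n "2 * j"] by (simp add: c_def)
  finally show "poly ?P (of_int (c - j)) = (-1) ^ n * poly ?P (of_int j)"
    by (simp add: OmegaB_poly_of_int[OF assms(1)])
qed

theorem proposition4p13:
  fixes n :: nat and w :: "int \<Rightarrow> int"
  assumes "signed_perm n w"
  shows "(w 1 > 0 \<longrightarrow> (\<forall>x::rat. poly (OmegaB_poly n w) (- x - 1/2)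
                             = (-1)^n * poly (OmegaB_poly n w) (x - 1/2))) \<and>
         (w 1 < 0 \<longrightarrow> (\<forall>x::rat. poly (OmegaB_poly n w) (- x)
                             = (-1)^n * poly (OmegaB_poly n w) x))"
proof -
  have ascent_0: "ascent w 0 \<longleftrightarrow> w 1 > 0"
    using signed_perm_0[OF assms] by (simp add: ascent_def)
  show ?thesis
  proof (intro conjI impI allI)
    fix x :: rat
    assume "w 1 > 0"
    then have "- x - 1/2 = of_int (if ascent w 0 then -1 else 0) - (x - 1/2)"
      using ascent_0 by simp
    then show "poly (OmegaB_poly n w) (- x - 1/2) = (-1)^n * poly (OmegaB_poly n w) (x - 1/2)"
      by (simp only: OmegaB_poly_reflect[OF assms])
  next
    fix x :: rat
    assume "w 1 < 0"
    then show "poly (OmegaB_poly n w) (- x) = (-1)^n * poly (OmegaB_poly n w) x"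
      using OmegaB_poly_reflect[OF assms, of x] ascent_0 by simp
  qed
qed

end
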